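(* The twisted arrow category $\mathrm{Tw}(sOp)$ of the operad $sOp$ of single-coloured operads, equivalently the Moerdijk--Weiss dendroidal category $\Omega$, is not quasi-Gr\"obner.
   Context: Here $sOp$ is the (set-)operad whose algebras are single-coloured (symmetric) operads, whose operations are operadic trees (rooted trees with half-edges, ordered leaves, ordered half-edges at each vertex, and ordered vertices). For an operad $P$, the twisted arrow category $\mathrm{Tw}(P)$ has the operations of $P$ as objects; a morphism from an operation $p$ of arity $n$ to an operation of arity $m$ is represented by a planar rooted tree of height 3 (height 2 if $n=0$) with $m$ input leaves indexed $1,\dots,m$, with exactly one middle vertex marked by $p$, a lower vertex marked by some $q_0$ connected to the middle vertex by its first input edge, and upper vertices marked by $q_1,\dots,q_n$ grafted on the inputs of $p$ (arities matching, leaf indices increasing in planar order above each vertex); the target is the evaluation of the tree, and composition is by grafting and evaluating the subtrees not containing the middle vertex. A category $\mathcal{D}$ is quasi-Gr\"obner if there is an essentially surjective functor $\Phi:\mathcal{C}\to\mathcal{D}$ satisfying property (F) (for every object $d$ there are finitely many $f_i:d\to\Phi(c_i)$ through which every $f:d\to\Phi(c)$ factors as $\Phi(g)\circ f_i$) with $\mathcal{C}$ Gr\"obner (admissible well-orders on morphisms out of each object, and the posets $|c/\mathcal{C}|$ Noetherian). For quasi-Gr\"obner categories and left-Noetherian rings $k$, the category of modules (functors to $k$-modules) is locally Noetherian. *)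

theory Defs
  imports "HOL-Library.FuncSet"
begin

record ('o, 'm) cat =
  Obj   :: "'o set"
  Hom   :: "'o \<Rightarrow> 'o \<Rightarrow> 'm set"
  comp  :: "'m \<Rightarrow> 'm \<Rightarrow> 'm"
  ident :: "'o \<Rightarrow> 'm"

definition category :: "('o, 'm) cat \<Rightarrow> bool" where
  "category C \<longleftrightarrow>
     (\<forall>a b f. f \<in> Hom C a b \<longrightarrow> a \<in> Obj C \<and> b \<in> Obj C) \<and>
     (\<forall>a \<in> Obj C. ident C a \<in> Hom C a a) \<and>
     (\<forall>a b c f g. f \<in> Hom C a b \<longrightarrow> g \<in> Hom C b c \<longrightarrow> comp C g f \<in> Hom C a c) \<and>
     (\<forall>a b f. f \<in> Hom C a b \<longrightarrow> comp C (ident C b) f = f \<and> comp C f (ident C a) = f) \<and>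
     (\<forall>a b c d f g h. f \<in> Hom C a b \<longrightarrow> g \<in> Hom C b c \<longrightarrow> h \<in> Hom C c d \<longrightarrow>
        comp C h (comp C g f) = comp C (comp C h g) f)"

definition is_functor ::
  "('o1, 'm1) cat \<Rightarrow> ('o2, 'm2) cat \<Rightarrow> ('o1 \<Rightarrow> 'o2) \<Rightarrow> ('m1 \<Rightarrow> 'm2) \<Rightarrow> bool" where
  "is_functor C D Fo Fm \<longleftrightarrow>
     (\<forall>a \<in> Obj C. Fo a \<in> Obj D) \<and>
     (\<forall>a b f. f \<in> Hom C a b \<longrightarrow> Fm f \<in> Hom D (Fo a) (Fo b)) \<and>
     (\<forall>a \<in> Obj C. Fm (ident C a) = ident D (Fo a)) \<and>
     (\<forall>a b c f g. f \<in> Hom C a b \<longrightarrow> g \<in> Hom C b c \<longrightarrow>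
        Fm (comp C g f) = comp D (Fm g) (Fm f))"

definition isomorphic :: "('o, 'm) cat \<Rightarrow> 'o \<Rightarrow> 'o \<Rightarrow> bool" where
  "isomorphic D a b \<longleftrightarrow>
     (\<exists>f g. f \<in> Hom D a b \<and> g \<in> Hom D b a \<and>
            comp D g f = ident D a \<and> comp D f g = ident D b)"

definition ess_surj ::
  "('o1, 'm1) cat \<Rightarrow> ('o2, 'm2) cat \<Rightarrow> ('o1 \<Rightarrow> 'o2) \<Rightarrow> bool" where
  "ess_surj C D Fo \<longleftrightarrow> (\<forall>d \<in> Obj D. \<exists>c \<in> Obj C. isomorphic D (Fo c) d)"

definition property_F ::
  "('o1, 'm1) cat \<Rightarrow> ('o2, 'm2) cat \<Rightarrow> ('o1 \<Rightarrow> 'o2) \<Rightarrow> ('m1 \<Rightarrow> 'm2) \<Rightarrow> bool" where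
  "property_F C D Fo Fm \<longleftrightarrow>
     (\<forall>d \<in> Obj D. \<exists>(n::nat) cs fs.
        (\<forall>i < n. cs i \<in> Obj C \<and> fs i \<in> Hom D d (Fo (cs i))) \<and>
        (\<forall>c \<in> Obj C. \<forall>f \<in> Hom D d (Fo c).
           \<exists>i < n. \<exists>g \<in> Hom C (cs i) c. f = comp D (Fm g) (fs i)))"

definition directed :: "('o, 'm) cat \<Rightarrow> bool" where
  "directed C \<longleftrightarrow> (\<forall>x \<in> Obj C. \<forall>f \<in> Hom C x x. f = ident C x)"

definition admissible_order_at :: "('o, 'm) cat \<Rightarrow> 'o \<Rightarrow> bool" where
  "admissible_order_at C x \<longleftrightarrow>
     (\<exists>R :: 'o \<Rightarrow> 'm rel.
        (\<forall>y \<in> Obj C. well_order_on (Hom C x y) (R y)) \<and>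
        (\<forall>y z f f' g. f \<in> Hom C x y \<longrightarrow> f' \<in> Hom C x y \<longrightarrow> g \<in> Hom C y z \<longrightarrow>
           (f, f') \<in> R y \<longrightarrow> f \<noteq> f' \<longrightarrow>
           (comp C g f, comp C g f') \<in> R z \<and> comp C g f \<noteq> comp C g f'))"

text \<open>|C_x| is noetherian: the preorder on morphisms out of x given by
  f \<le> f' iff f' = h o f for some h is a well-quasi-order (every infinite sequence
  has i < j with s_i \<le> s_j); passing to isomorphism classes does not change this.\<close>
definition noetherian_at :: "('o, 'm) cat \<Rightarrow> 'o \<Rightarrow> bool" where
  "noetherian_at C x \<longleftrightarrow>
     (\<forall>s :: nat \<Rightarrow> 'm. (\<forall>n. \<exists>y \<in> Obj C. s n \<in> Hom C x y) \<longrightarrow>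
        (\<exists>i j. i < j \<and> (\<exists>y z h. s i \<in> Hom C x y \<and> s j \<in> Hom C x z \<and>
                                 h \<in> Hom C y z \<and> s j = comp C h (s i))))"

definition groebner :: "('o, 'm) cat \<Rightarrow> bool" where
  "groebner C \<longleftrightarrow> category C \<and> directed C \<and>
     (\<forall>x \<in> Obj C. admissible_order_at C x \<and> noetherian_at C x)"

text \<open>D is quasi-Groebner via a Groebner category C living on the types 'o, 'm.
  (Quasi-Groebner = this holds for some C of some types.)\<close>
definition quasi_groebner_via ::
  "('o1, 'm1) cat \<Rightarrow> ('o2, 'm2) cat \<Rightarrow> ('o1 \<Rightarrow> 'o2) \<Rightarrow> ('m1 \<Rightarrow> 'm2) \<Rightarrow> bool" where
  "quasi_groebner_via C D Fo Fm \<longleftrightarrow>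
     groebner C \<and> is_functor C D Fo Fm \<and> ess_surj C D Fo \<and> property_F C D Fo Fm"

text \<open>A finite rooted (non-planar) tree: a finite set of edges, a root edge, and vertices,
  each given by its output edge and its set of input edges.\<close>
record dtree =
  edges :: "nat set"
  root  :: nat
  verts :: "(nat \<times> nat set) set"

definition parent_rel :: "dtree \<Rightarrow> (nat \<times> nat) set" where
  "parent_rel T = {(e, v). \<exists>I. (v, I) \<in> verts T \<and> e \<in> I}"

definition wf_tree :: "dtree \<Rightarrow> bool" where
  "wf_tree T \<longleftrightarrow>
     finite (edges T) \<and> root T \<in> edges T \<and>
     (\<forall>(v, I) \<in> verts T. v \<in> edges T \<and> I \<subseteq> edges T \<and> v \<notin> I) \<and>
     (\<forall>v I J. (v, I) \<in> verts T \<longrightarrow> (v, J) \<in> verts T \<longrightarrow> I = J) \<and>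
     (\<forall>v. (\<exists>I. (v, I) \<in> verts T \<and> root T \<in> I) \<longrightarrow> False) \<and>
     (\<forall>e \<in> edges T. e \<noteq> root T \<longrightarrow> (\<exists>!v. \<exists>I. (v, I) \<in> verts T \<and> e \<in> I)) \<and>
     (\<forall>e \<in> edges T. (e, root T) \<in> (parent_rel T)\<^sup>*)"

text \<open>Operations of the free coloured operad Omega(T): tree_op T L c holds iff
  Omega(T)(l_1,...,l_n; c) is nonempty for an enumeration l_1..l_n of L (it is then a singleton).\<close>
inductive tree_op :: "dtree \<Rightarrow> nat set \<Rightarrow> nat \<Rightarrow> bool" for T where
  unit:    "e \<in> edges T \<Longrightarrow> tree_op T {e} e"
| corolla: "(v, I) \<in> verts T \<Longrightarrow> tree_op T I v"
| graft:   "tree_op T L c \<Longrightarrow> e \<in> L \<Longrightarrow> tree_op T M e \<Longrightarrow> tree_op T ((L - {e}) \<union> M) c"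

text \<open>Operad maps Omega(S) \<rightarrow> Omega(T): edge maps sending each vertex of S to an operation of Omega(T).\<close>
definition omega_map :: "dtree \<Rightarrow> dtree \<Rightarrow> (nat \<Rightarrow> nat) \<Rightarrow> bool" where
  "omega_map S T f \<longleftrightarrow>
     f \<in> edges S \<rightarrow>\<^sub>E edges T \<and>
     (\<forall>(v, I) \<in> verts S. inj_on f I \<and> tree_op T (f ` I) (f v))"

type_synonym omega_mor = "dtree \<times> dtree \<times> (nat \<Rightarrow> nat)"

definition Omega :: "(dtree, omega_mor) cat" where
  "Omega = \<lparr> Obj = {T. wf_tree T},
             Hom = (\<lambda>S T. if wf_tree S \<and> wf_tree T
                           then {(S, T, f) | f. omega_map S T f} else {}),
             comp = (\<lambda>(T', U, g) (S, T, f). (S, U, restrict (g \<circ> f) (edges S))),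
             ident = (\<lambda>T. (T, T, restrict id (edges T))) \<rparr>"

end

theory Submission
  imports Defs "HOL-Library.Infinite_Set"
begin

(* The one-edge tree \<eta> maps to every tree, so property (F) at \<eta> yields finitely many
   objects c_1, ..., c_N of the Groebner category such that every object of Omega, in
   particular every corolla C_n (n \<ge> 2), is up to isomorphism the target of a morphism
   out of some c_i. By the pigeonhole principle one c_i serves infinitely many corollas,
   and noetherianity of |c_i / C| then produces a morphism C_m \<rightarrow> C_n between corollas
   with 2 \<le> m < n. No such map exists: it sends the m inputs of C_m injectively to the
   inputs of an operation of C_n, and the only operations of C_n are the units and the
   n-ary corolla itself. *)

lemma noetherian_at_finitely_many_sources:
  fixes N :: nat and ii :: "nat \<Rightarrow> nat"
  assumes noeth: "\<And>i. i < N \<Longrightarrow> noetherian_at C (cs i)"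
    and src: "\<And>n. ii n < N"
    and mor: "\<And>n. g n \<in> Hom C (cs (ii n)) (ys n)" and obj: "\<And>n. ys n \<in> Obj C"
  obtains a b y z h where "a < b" "ii a = ii b"
    "g a \<in> Hom C (cs (ii a)) y" "g b \<in> Hom C (cs (ii a)) z"
    "h \<in> Hom C y z" "g b = comp C h (g a)"
proof -
  have "range ii \<subseteq> {..<N}"
    using src by auto
  then have "finite (range ii)"
    by (rule finite_subset) simp
  then obtain n0 where "infinite {n. ii n = ii n0}"
    using pigeonhole_infinite[of UNIV ii] infinite_UNIV_nat by auto
  then obtain r :: "nat \<Rightarrow> nat" where r: "strict_mono r" "\<And>j. ii (r j) = ii n0"
    using infinite_enumerate by blast
  let ?x = "cs (ii n0)"
  have "\<exists>y \<in> Obj C. (g \<circ> r) j \<in> Hom C ?x y" for j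
    using mor[of "r j"] obj[of "r j"] r(2)[of j] by auto
  from noeth[OF src[of n0], unfolded noetherian_at_def, rule_format, OF this]
  have "\<exists>a b. a < b \<and> (\<exists>y z h. g (r a) \<in> Hom C ?x y \<and> g (r b) \<in> Hom C ?x z \<and>
                h \<in> Hom C y z \<and> g (r b) = comp C h (g (r a)))"
    by simp
  then obtain a b y z h where "a < b" "g (r a) \<in> Hom C ?x y" "g (r b) \<in> Hom C ?x z"
    "h \<in> Hom C y z" "g (r b) = comp C h (g (r a))"
    by blast
  moreover have "r a < r b"
    using \<open>a < b\<close> r(1) by (simp add: strict_mono_less)
  ultimately show thesis
    using that[of "r a" "r b" y z h] r(2) by simp
qed

text \<open>The hypothesis typed is needed because Hom-sets of C may overlap: noetherianity only
  relates some codomains y, z of the chosen morphisms, and typedness of D identifies their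
  images under the functor with the intended objects.\<close>

lemma quasi_groebner_via_weakly_initial:
  fixes ds :: "nat \<Rightarrow> 'o"
  assumes qg: "quasi_groebner_via C D Fo Fm"
    and typed: "\<And>f a b b'. f \<in> Hom D a b \<Longrightarrow> f \<in> Hom D a b' \<Longrightarrow> b = b'"
    and d: "d \<in> Obj D" and weakly_initial: "\<And>x. x \<in> Obj D \<Longrightarrow> Hom D d x \<noteq> {}"
    and ds: "\<And>n. ds n \<in> Obj D"
  obtains a b X Y where "a < b" "isomorphic D X (ds a)" "isomorphic D Y (ds b)"
    "Hom D X Y \<noteq> {}"
proof -
  have Phi: "is_functor C D Fo Fm"
    and noeth: "\<And>x. x \<in> Obj C \<Longrightarrow> noetherian_at C x"
    using qg unfolding quasi_groebner_via_def groebner_def by auto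
  obtain N :: nat and cs fs where cs: "\<And>i. i < N \<Longrightarrow> cs i \<in> Obj C"
    and factor: "\<forall>c \<in> Obj C. \<forall>f \<in> Hom D d (Fo c).
                   \<exists>i < N. \<exists>g \<in> Hom C (cs i) c. f = comp D (Fm g) (fs i)"
    using qg d unfolding quasi_groebner_via_def property_F_def by metis
  have "\<forall>n. \<exists>c \<in> Obj C. isomorphic D (Fo c) (ds n)"
    using qg ds unfolding quasi_groebner_via_def ess_surj_def by blast
  then obtain cc where cc: "\<And>n. cc n \<in> Obj C" "\<And>n. isomorphic D (Fo (cc n)) (ds n)"
    by metis
  have "\<exists>i < N. \<exists>g. g \<in> Hom C (cs i) (cc n)" for n
  proof -
    have "Fo (cc n) \<in> Obj D"
      using Phi cc(1) unfolding is_functor_def by blast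
    then obtain f where "f \<in> Hom D d (Fo (cc n))"
      using weakly_initial by blast
    then show ?thesis
      using factor cc(1) by blast
  qed
  then obtain ii g where ii: "\<And>n. ii n < N" and g: "\<And>n. g n \<in> Hom C (cs (ii n)) (cc n)"
    by metis
  have "\<And>i. i < N \<Longrightarrow> noetherian_at C (cs i)"
    using noeth cs by blast
  then obtain a b y z h where "a < b" and same_source: "ii a = ii b"
    and ga: "g a \<in> Hom C (cs (ii a)) y" and gb: "g b \<in> Hom C (cs (ii a)) z"
    and h: "h \<in> Hom C y z"
    using ii g cc(1) by (rule noetherian_at_finitely_many_sources[of N C cs ii g cc]) blast
  have Fm_Hom: "Fm f \<in> Hom D (Fo x) (Fo x')" if "f \<in> Hom C x x'" for f x x'
    using Phi that unfolding is_functor_def by blast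
  have "Fo y = Fo (cc a)"
    using typed[OF Fm_Hom[OF ga] Fm_Hom[OF g]] .
  moreover have "Fo z = Fo (cc b)"
    using typed[OF Fm_Hom[OF gb[unfolded same_source]] Fm_Hom[OF g]] .
  ultimately have "Hom D (Fo (cc a)) (Fo (cc b)) \<noteq> {}"
    using Fm_Hom[OF h] by auto
  then show thesis
    using that \<open>a < b\<close> cc(2) by blast
qed

definition corolla :: "nat \<Rightarrow> dtree" where
  "corolla n = \<lparr> edges = {0..n}, root = 0, verts = {(0, {1..n})} \<rparr>"

definition unit_tree :: dtree where
  "unit_tree = \<lparr> edges = {0}, root = 0, verts = {} \<rparr>"

lemma wf_tree_corolla: "wf_tree (corolla n)"
proof -
  have "(e, 0) \<in> parent_rel (corolla n)" if "e \<in> {1..n}" for e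
    using that unfolding parent_rel_def corolla_def by auto
  then have "(e, 0) \<in> (parent_rel (corolla n))\<^sup>*" if "e \<in> {0..n}" for e
    using that by (cases "e = 0") (simp_all add: r_into_rtrancl)
  then show ?thesis
    unfolding wf_tree_def by (auto simp: corolla_def)
qed

lemma wf_tree_unit_tree: "wf_tree unit_tree"
  unfolding wf_tree_def unit_tree_def parent_rel_def by auto

lemma Omega_Hom_iff:
  "F \<in> Hom Omega S T \<longleftrightarrow> wf_tree S \<and> wf_tree T \<and> (\<exists>f. F = (S, T, f) \<and> omega_map S T f)"
  by (auto simp: Omega_def)

lemma Omega_Hom_codomain: "F \<in> Hom Omega S T \<Longrightarrow> F \<in> Hom Omega S T' \<Longrightarrow> T = T'"
  by (auto simp: Omega_Hom_iff)

lemma Omega_Hom_from_unit_tree: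
  assumes "wf_tree T"
  shows "(unit_tree, T, restrict (\<lambda>_. root T) {0}) \<in> Hom Omega unit_tree T"
proof -
  have "omega_map unit_tree T (restrict (\<lambda>_. root T) {0})"
    using assms unfolding omega_map_def unit_tree_def wf_tree_def by auto
  then show ?thesis
    using assms wf_tree_unit_tree by (simp add: Omega_Hom_iff)
qed

lemma Omega_isomorphicE:
  assumes "isomorphic Omega V W"
  obtains F G where "omega_map V W F" "omega_map W V G"
    "\<And>x. x \<in> edges V \<Longrightarrow> G (F x) = x" "\<And>y. y \<in> edges W \<Longrightarrow> F (G y) = y"
proof -
  obtain f g where fg: "f \<in> Hom Omega V W" "g \<in> Hom Omega W V"
    "comp Omega g f = ident Omega V" "comp Omega f g = ident Omega W"
    using assms unfolding isomorphic_def by blast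
  then obtain F G where F: "omega_map V W F" and G: "omega_map W V G"
    and "f = (V, W, F)" "g = (W, V, G)"
    by (auto simp: Omega_Hom_iff)
  with fg(3,4) have GF: "restrict (G \<circ> F) (edges V) = restrict id (edges V)"
    and FG: "restrict (F \<circ> G) (edges W) = restrict id (edges W)"
    by (simp_all add: Omega_def)
  show thesis
  proof (rule that[OF F G])
    show "G (F x) = x" if "x \<in> edges V" for x
      using fun_cong[OF GF, of x] that by simp
    show "F (G y) = y" if "y \<in> edges W" for y
      using fun_cong[OF FG, of y] that by simp
  qed
qed

lemma tree_op_single_vertex:
  assumes "verts T \<subseteq> {(r, J)}" "r \<notin> J" "tree_op T L c"
  shows "L = {c} \<or> (c = r \<and> L = J \<and> (r, J) \<in> verts T)"
  using assms(3)
proof induct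
  case (unit e)
  then show ?case by simp
next
  case (corolla v I)
  then show ?case using assms(1) by auto
next
  case (graft L c e M)
  show ?case
  proof (cases "L = {c}")
    case True
    then have "e = c"
      using graft by auto
    then show ?thesis
      using graft True by auto
  next
    case False
    then have "c = r" "L = J" "(r, J) \<in> verts T" "e \<noteq> r"
      using graft assms(2) by auto
    then have "M = {e}"
      using graft by auto
    then show ?thesis
      using \<open>c = r\<close> \<open>L = J\<close> \<open>(r, J) \<in> verts T\<close> graft by auto
  qed
qed

lemma isomorphic_corolla_single_vertex:
  assumes "wf_tree V" and "2 \<le> n" and "isomorphic Omega V (corolla n)"
  obtains r J where "verts V = {(r, J)}" "r \<notin> J" "card J = n"
proof -
  obtain F G where F: "omega_map V (corolla n) F" and G: "omega_map (corolla n) V G"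
    and GF: "\<And>x. x \<in> edges V \<Longrightarrow> G (F x) = x"
    and FG: "\<And>y. y \<in> {0..n} \<Longrightarrow> F (G y) = y"
    using assms(3) by (rule Omega_isomorphicE) (auto simp: corolla_def)
  define r where "r = G 0"
  define J where "J = G ` {1..n}"
  have inj: "inj_on G {0..n}"
    by (metis FG inj_onI)
  then have "r \<notin> J"
    unfolding r_def J_def by (fastforce dest: inj_onD)
  have "card J = n"
    unfolding J_def using inj by (simp add: card_image inj_on_subset)
  have "tree_op V J r"
    using G unfolding omega_map_def J_def r_def corolla_def by auto
  have "verts V \<subseteq> {(r, J)}"
  proof
    fix p assume "p \<in> verts V"
    then obtain v I where p: "p = (v, I)" "(v, I) \<in> verts V"
      by (cases p) auto
    then have vI: "v \<in> edges V" "I \<subseteq> edges V" "v \<notin> I"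
      using assms(1) unfolding wf_tree_def by auto
    have "tree_op (corolla n) (F ` I) (F v)"
      using F p unfolding omega_map_def by auto
    then have "F ` I = {F v} \<or> (F v = 0 \<and> F ` I = {1..n})"
      using tree_op_single_vertex[of "corolla n" 0 "{1..n}"] by (auto simp: corolla_def)
    moreover have "F ` I \<noteq> {F v}"
      using GF vI by (metis image_iff insertI1 subsetD)
    ultimately have "F v = 0" "F ` I = {1..n}"
      by auto
    have "v = r"
      using GF[of v] vI \<open>F v = 0\<close> unfolding r_def by simp
    moreover have "I = J"
    proof -
      have "G ` F ` I = I"
        using GF vI by (force simp: image_image)
      then show ?thesis
        unfolding J_def using \<open>F ` I = {1..n}\<close> by simp
    qed
    ultimately show "p \<in> {(r, J)}"
      using p by simp
  qed
  moreover have "J \<noteq> {r}"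
    using \<open>r \<notin> J\<close> \<open>card J = n\<close> assms(2) by auto
  ultimately have "verts V = {(r, J)}"
    using tree_op_single_vertex[OF _ \<open>r \<notin> J\<close> \<open>tree_op V J r\<close>] by auto
  then show thesis
    using that \<open>r \<notin> J\<close> \<open>card J = n\<close> by blast
qed

lemma omega_map_single_vertex_card_eq:
  assumes "omega_map V U k" "verts V = {(r, J)}" "verts U = {(r', J')}" "r' \<notin> J'"
    and "2 \<le> card J"
  shows "card J' = card J"
proof -
  have "inj_on k J" "tree_op U (k ` J) (k r)"
    using assms(1,2) unfolding omega_map_def by auto
  then have "card (k ` J) = card J"
    by (simp add: card_image)
  moreover have "k ` J = {k r} \<or> k ` J = J'"
    using tree_op_single_vertex[of U r' J'] assms(3,4) \<open>tree_op U (k ` J) (k r)\<close> by blast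
  ultimately show ?thesis
    using assms(5) by auto
qed

lemma no_Omega_Hom_between_corollas:
  assumes "2 \<le> m" "2 \<le> n" "m \<noteq> n"
    and "isomorphic Omega X (corolla m)" "isomorphic Omega Y (corolla n)"
  shows "Hom Omega X Y = {}"
proof (rule ccontr)
  assume "Hom Omega X Y \<noteq> {}"
  then obtain k where "wf_tree X" "wf_tree Y" "omega_map X Y k"
    by (auto simp: Omega_Hom_iff)
  obtain r J where "verts X = {(r, J)}" "card J = m"
    using isomorphic_corolla_single_vertex \<open>wf_tree X\<close> assms(1,4) by metis
  moreover obtain r' J' where "verts Y = {(r', J')}" "r' \<notin> J'" "card J' = n"
    using isomorphic_corolla_single_vertex \<open>wf_tree Y\<close> assms(2,5) by metis
  ultimately show False
    using omega_map_single_vertex_card_eq[OF \<open>omega_map X Y k\<close>] assms(1,3) by metis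
qed

theorem proposition5p6:
  fixes C :: "('o, 'm) cat" and Fo :: "'o \<Rightarrow> dtree" and Fm :: "'m \<Rightarrow> omega_mor"
  shows "\<not> quasi_groebner_via C Omega Fo Fm"
proof
  assume qg: "quasi_groebner_via C Omega Fo Fm"
  obtain a b X Y where "a < b" "isomorphic Omega X (corolla (a + 2))"
    "isomorphic Omega Y (corolla (b + 2))" "Hom Omega X Y \<noteq> {}"
  proof (rule quasi_groebner_via_weakly_initial[OF qg Omega_Hom_codomain])
    show "unit_tree \<in> Obj Omega" "\<And>n. corolla (n + 2) \<in> Obj Omega"
      by (simp_all add: Omega_def wf_tree_unit_tree wf_tree_corolla)
    show "Hom Omega unit_tree T \<noteq> {}" if "T \<in> Obj Omega" for T
    proof -
      have "wf_tree T"
        using that by (simp add: Omega_def)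
      then show ?thesis
        using Omega_Hom_from_unit_tree by blast
    qed
  qed
  then show False
    using no_Omega_Hom_between_corollas[of "a + 2" "b + 2" X Y] by simp
qed

end
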